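(* Let $p,q,r$ be integers with $1<p<q<r$, $p$ odd and $pq+pr-qr=1$, and let $n_p=(p-1)/2$. Then $D(p,q,r)=p-1$ if and only if $q-p\ge n_p$.
   Context: $t_{p,q}$, $\alpha_{p,q}$ are the quotient and remainder of $n_p$ divided by $q-p$ ($n_p=t_{p,q}(q-p)+\alpha_{p,q}$, $0\le\alpha_{p,q}<q-p$), and $D(p,q,r)=(t_{p,q}+1)(n_p+\alpha_{p,q})$. *)

theory Defs
  imports Main
begin

definition n_p :: "int \<Rightarrow> int" where
  "n_p p = (p - 1) div 2"

definition t_pq :: "int \<Rightarrow> int \<Rightarrow> int" where
  "t_pq p q = n_p p div (q - p)"

definition alpha_pq :: "int \<Rightarrow> int \<Rightarrow> int" where
  "alpha_pq p q = n_p p mod (q - p)"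

(* r does not enter the formula; kept as argument as in the paper *)
definition D :: "int \<Rightarrow> int \<Rightarrow> int \<Rightarrow> int" where
  "D p q r = (t_pq p q + 1) * (n_p p + alpha_pq p q)"

end

theory Submission
  imports Defs
begin

text \<open>Write \<open>n_p = t d + \<alpha>\<close> with \<open>d = q - p\<close>. If \<open>d \<ge> n_p\<close>, then either \<open>d = n_p\<close>
  (\<open>t = 1\<close>, \<open>\<alpha> = 0\<close>) or \<open>d > n_p\<close> (\<open>t = 0\<close>, \<open>\<alpha> = n_p\<close>), and in both cases
  \<open>D = 2 n_p = p - 1\<close>. If \<open>d < n_p\<close>, then \<open>t \<ge> 1\<close> and \<open>D > 2 n_p\<close>: for \<open>t = 1\<close> the
  remainder \<open>\<alpha> = n_p - d\<close> is positive, and for \<open>t \<ge> 2\<close> already \<open>D \<ge> 3 n_p\<close>.\<close>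

lemma div_mod_weight_eq_double:
  fixes n d :: int
  assumes "0 < n" "n \<le> d"
  shows "(n div d + 1) * (n + n mod d) = 2 * n"
proof (cases "n = d")
  case True
  then show ?thesis using \<open>0 < n\<close> by simp
next
  case False
  with assms have "n div d = 0" "n mod d = n"
    by (simp_all add: div_pos_pos_trivial mod_pos_pos_trivial)
  then show ?thesis by simp
qed

lemma div_mod_weight_gt_double:
  fixes n d :: int
  assumes "0 < d" "d < n"
  shows "(n div d + 1) * (n + n mod d) > 2 * n"
proof -
  define t where "t = n div d"
  define a where "a = n mod d"
  have n_eq: "n = t * d + a" unfolding t_def a_def by simp
  have a_nonneg: "0 \<le> a" unfolding a_def using \<open>0 < d\<close> by simp
  have "t \<ge> 1" unfolding t_def using zdiv_mono1[of d n d] assms by simp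
  show ?thesis
  proof (cases "t = 1")
    case True
    then have "a > 0" using n_eq \<open>d < n\<close> by simp
    then show ?thesis using True unfolding t_def a_def by simp
  next
    case False
    with \<open>t \<ge> 1\<close> have "(t + 1) * (n + a) \<ge> 3 * (n + a)"
      using a_nonneg \<open>d < n\<close> \<open>0 < d\<close> by (intro mult_right_mono) simp_all
    moreover have "3 * (n + a) > 2 * n" using a_nonneg \<open>d < n\<close> \<open>0 < d\<close> by simp
    ultimately show ?thesis unfolding t_def a_def by linarith
  qed
qed

lemma div_mod_weight_eq_double_iff:
  fixes n d :: int
  assumes "0 < n" "0 < d"
  shows "(n div d + 1) * (n + n mod d) = 2 * n \<longleftrightarrow> n \<le> d"
  using div_mod_weight_eq_double[OF \<open>0 < n\<close>] div_mod_weight_gt_double[OF \<open>0 < d\<close>]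
  by (metis less_irrefl not_le)

lemma odd_minus_one_eq_double_n_p:
  assumes "odd p"
  shows "p - 1 = 2 * n_p p"
  using assms unfolding n_p_def by (elim oddE) simp

lemma n_p_pos:
  assumes "1 < p" "odd p"
  shows "0 < n_p p"
  using assms odd_minus_one_eq_double_n_p by fastforce

theorem proposition4p3:
  fixes p q r :: int
  assumes "1 < p" "p < q" "q < r" "odd p" "p * q + p * r - q * r = 1"
  shows "D p q r = p - 1 \<longleftrightarrow> q - p \<ge> n_p p"
proof -
  have "D p q r = (n_p p div (q - p) + 1) * (n_p p + n_p p mod (q - p))"
    unfolding D_def t_pq_def alpha_pq_def ..
  moreover have "p - 1 = 2 * n_p p"
    using \<open>odd p\<close> by (rule odd_minus_one_eq_double_n_p)
  ultimately show ?thesis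
    using div_mod_weight_eq_double_iff n_p_pos[OF \<open>1 < p\<close> \<open>odd p\<close>] \<open>p < q\<close> by simp
qed

end
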